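(* For every language $L$ that has a neutral letter, $Q^{\star}_L\mathrm{FO}\equiv Q^{1}_L\mathrm{FO}$, where in both logics the quantifier may bind relation variables of any arity $m\ge1$.
   Context: A letter $e$ is a neutral letter of $L\subseteq\Sigma^*$ if for all $u,v\in\Sigma^*$, $uv\in L\iff uev\in L$. Strings as structures: a nonempty string $b_0\cdots b_{n-1}$ over the ordered alphabet $(a_1,\dots,a_s)$ is the structure with universe $\{0,\dots,n-1\}$, natural order $<$, and unary predicates $P_{a_i}=\{j:b_j=a_i\}$. FO uses $=$, $<$, these predicates, $\min,\max$, connectives, $\exists,\forall$; no other built-in relations. $m$-ary second-order Lindström quantifiers: for $L$ over $(a_1,\dots,a_s)$ and distinct $m$-ary relation variables $\overline X=(X_1,\dots,X_k)$, over universe $\{0,\dots,n-1\}$ encode a relation $A_i\subseteq\{0,\dots,n-1\}^m$ by the bit string $s^i_0\cdots s^i_{n^m-1}$ with $s^i_j=1$ iff the $j$-th tuple of $\{0,\dots,n-1\}^m$ in lexicographic order is in $A_i$. For $Q^1_L$ the $2^{n^mk}$ assignments are ordered lexicographically by the interleaved code $s^1_0\cdots s^k_0s^1_1\cdots s^k_1\cdots$; for $Q^\star_L$ by the concatenated code $s^1_0\cdots s^1_{n^m-1}\cdots s^k_0\cdots s^k_{n^m-1}$. Then $\mathcal A\models Q\overline X[\varphi_1,\dots,\varphi_{s-1}]$ iff the word whose $i$-th letter is $a_j$ for the least $j$ with $\varphi_j$ true at the $i$-th assignment (and $a_s$ if none) lies in $L$. $Q^1_L\mathrm{FO}$ (resp.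 $Q^\star_L\mathrm{FO}$) consists of all formulas $Q^1_L\overline X[\varphi_1,\dots,\varphi_{s-1}]$ (resp. with $Q^\star_L$) with $\overline X$ a tuple of $m$-ary relation variables for some $m\ge1$ and $\varphi_i$ first-order formulas possibly containing $\overline X$. $\mathcal L\equiv\mathcal L'$ means over every string signature each sentence of either logic has an equivalent sentence of the other. *)

theory Defs
  imports Main
begin

text \<open>Ordered alphabets (a_1,...,a_s) are encoded as the letters 0,...,s-1
(letter a_i is the number i-1). Words are lists of natural numbers.\<close>

definition neutral_letter :: "nat list set \<Rightarrow> nat \<Rightarrow> nat \<Rightarrow> bool" where
  "neutral_letter L s e \<longleftrightarrow>
     (\<forall>u v. set u \<subseteq> {..<s} \<longrightarrow> set v \<subseteq> {..<s} \<longrightarrow> (u @ v \<in> L \<longleftrightarrow> u @ [e] @ v \<in> L))"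

datatype trm = Var nat | MinT | MaxT

datatype fo =
    Eq trm trm
  | Less trm trm
  | Pred nat trm
  | Rel nat "trm list"
  | Neg fo
  | Conj fo fo
  | Disj fo fo
  | Imp fo fo
  | Ex nat fo
  | All nat fo

fun tval :: "nat list \<Rightarrow> (nat \<Rightarrow> nat) \<Rightarrow> trm \<Rightarrow> nat" where
  "tval w v (Var x) = v x"
| "tval w v MinT = 0"
| "tval w v MaxT = length w - 1"

fun fvt :: "trm \<Rightarrow> nat set" where
  "fvt (Var x) = {x}"
| "fvt MinT = {}"
| "fvt MaxT = {}"

fun fv :: "fo \<Rightarrow> nat set" where
  "fv (Eq a b) = fvt a \<union> fvt b"
| "fv (Less a b) = fvt a \<union> fvt b"
| "fv (Pred c a) = fvt a"
| "fv (Rel X ts) = (\<Union>t\<in>set ts. fvt t)"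
| "fv (Neg p) = fv p"
| "fv (Conj p q) = fv p \<union> fv q"
| "fv (Disj p q) = fv p \<union> fv q"
| "fv (Imp p q) = fv p \<union> fv q"
| "fv (Ex x p) = fv p - {x}"
| "fv (All x p) = fv p - {x}"

text \<open>Well-formedness over string signature with t letters, where the only
relation variables are X_1..X_k (indices 0..k-1), all of arity m.\<close>
fun wf :: "nat \<Rightarrow> nat \<Rightarrow> nat \<Rightarrow> fo \<Rightarrow> bool" where
  "wf t m k (Eq a b) = True"
| "wf t m k (Less a b) = True"
| "wf t m k (Pred c a) = (c < t)"
| "wf t m k (Rel X ts) = (X < k \<and> length ts = m)"
| "wf t m k (Neg p) = wf t m k p"
| "wf t m k (Conj p q) = (wf t m k p \<and> wf t m k q)"
| "wf t m k (Disj p q) = (wf t m k p \<and> wf t m k q)"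
| "wf t m k (Imp p q) = (wf t m k p \<and> wf t m k q)"
| "wf t m k (Ex x p) = wf t m k p"
| "wf t m k (All x p) = wf t m k p"

fun sat :: "nat list \<Rightarrow> (nat \<Rightarrow> nat list set) \<Rightarrow> (nat \<Rightarrow> nat) \<Rightarrow> fo \<Rightarrow> bool" where
  "sat w R v (Eq a b) = (tval w v a = tval w v b)"
| "sat w R v (Less a b) = (tval w v a < tval w v b)"
| "sat w R v (Pred c a) = (tval w v a < length w \<and> w ! tval w v a = c)"
| "sat w R v (Rel X ts) = (map (tval w v) ts \<in> R X)"
| "sat w R v (Neg p) = (\<not> sat w R v p)"
| "sat w R v (Conj p q) = (sat w R v p \<and> sat w R v q)"
| "sat w R v (Disj p q) = (sat w R v p \<or> sat w R v q)"
| "sat w R v (Imp p q) = (sat w R v p \<longrightarrow> sat w R v q)"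
| "sat w R v (Ex x p) = (\<exists>i<length w. sat w R (v(x := i)) p)"
| "sat w R v (All x p) = (\<forall>i<length w. sat w R (v(x := i)) p)"

fun tuples :: "nat \<Rightarrow> nat \<Rightarrow> nat list list" where
  "tuples n 0 = [[]]"
| "tuples n (Suc m) = concat (map (\<lambda>i. map (Cons i) (tuples n m)) [0..<n])"

fun bitstrings :: "nat \<Rightarrow> bool list list" where
  "bitstrings 0 = [[]]"
| "bitstrings (Suc l) = map (Cons False) (bitstrings l) @ map (Cons True) (bitstrings l)"

definition decode_inter :: "nat \<Rightarrow> nat \<Rightarrow> nat \<Rightarrow> bool list \<Rightarrow> nat \<Rightarrow> nat list set" where
  "decode_inter n m k c i =
     (if i < k then {tuples n m ! j | j. j < n ^ m \<and> c ! (j * k + i)} else {})"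

definition decode_concat :: "nat \<Rightarrow> nat \<Rightarrow> nat \<Rightarrow> bool list \<Rightarrow> nat \<Rightarrow> nat list set" where
  "decode_concat n m k c i =
     (if i < k then {tuples n m ! j | j. j < n ^ m \<and> c ! (i * n ^ m + j)} else {})"

definition letter :: "nat list \<Rightarrow> (nat \<Rightarrow> nat list set) \<Rightarrow> fo list \<Rightarrow> nat" where
  "letter w R phis =
     (if \<exists>j<length phis. sat w R (\<lambda>_. 0) (phis ! j)
      then (LEAST j. j < length phis \<and> sat w R (\<lambda>_. 0) (phis ! j))
      else length phis)"

definition qsem :: "(nat \<Rightarrow> nat \<Rightarrow> nat \<Rightarrow> bool list \<Rightarrow> nat \<Rightarrow> nat list set)
    \<Rightarrow> nat list set \<Rightarrow> nat \<Rightarrow> nat \<Rightarrow> fo list \<Rightarrow> nat list \<Rightarrow> bool" where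
  "qsem dec L m k phis w =
     (map (\<lambda>c. letter w (dec (length w) m k c) phis) (bitstrings (length w ^ m * k)) \<in> L)"

abbreviation "qsem_inter \<equiv> qsem decode_inter"
abbreviation "qsem_concat \<equiv> qsem decode_concat"

text \<open>A sentence Q X_1..X_k [phi_1..phi_(s-1)] with m-ary relation variables,
over the string signature with t letters, for a language over s letters.\<close>
definition qsentence :: "nat \<Rightarrow> nat \<Rightarrow> nat \<Rightarrow> nat \<Rightarrow> fo list \<Rightarrow> bool" where
  "qsentence t s m k phis \<longleftrightarrow>
     1 \<le> m \<and> 1 \<le> k \<and> length phis = s - 1 \<and>
     (\<forall>p\<in>set phis. wf t m k p \<and> fv p = {})"

definition string_over :: "nat \<Rightarrow> nat list \<Rightarrow> bool" where
  "string_over t w \<longleftrightarrow> w \<noteq> [] \<and> set w \<subseteq> {..<t}"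

definition logics_equiv :: "nat list set \<Rightarrow> nat \<Rightarrow> bool" where
  "logics_equiv L s \<longleftrightarrow> (\<forall>t.
     (\<forall>m k phis. qsentence t s m k phis \<longrightarrow>
        (\<exists>m' k' psis. qsentence t s m' k' psis \<and>
           (\<forall>w. string_over t w \<longrightarrow> (qsem_concat L m k phis w \<longleftrightarrow> qsem_inter L m' k' psis w)))) \<and>
     (\<forall>m k phis. qsentence t s m k phis \<longrightarrow>
        (\<exists>m' k' psis. qsentence t s m' k' psis \<and>
           (\<forall>w. string_over t w \<longrightarrow> (qsem_inter L m k phis w \<longleftrightarrow> qsem_concat L m' k' psis w)))))"

end

theory Submission
  imports Defs
begin

text \<open>
  Both quantifiers range over the same assignments of \<open>k\<close> \<open>m\<close>-ary relations \<open>X\<^sub>i\<close>; they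
  differ only in the order in which the assignments are listed. Simulate \<open>X\<^sub>i(t)\<close> by a relation
  of arity \<open>k + m\<close> holding \<open>t\<close> together with the thermometer tuple
  \<open>(min,\<dots>,min,max,\<dots>,max)\<close> with \<open>i\<close> maxima. The assignments of the new relations that are
  supported on such tuples correspond bijectively to the old assignments, and with the
  thermometer placed suitably (as a prefix for the interleaved order; as a suffix, inside a
  single relation, for the concatenated order) the new lexicographic order restricts to the old
  one. A first-order guard recognizes the supported assignments, and on all other assignments
  the translated formulas produce the neutral letter \<open>e\<close>. Deleting all \<open>e\<close> turns the new word
  into the old one, so by neutrality both words lie in \<open>L\<close> or neither does.
\<close>

section \<open>Lexicographic enumerations\<close>

lemma mult_add_less: "a < A \<Longrightarrow> b < B \<Longrightarrow> a * B + b < A * B" for a b A B :: nat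
proof -
  assume "a < A" "b < B"
  then have "a * B + b < Suc a * B" by simp
  also have "\<dots> \<le> A * B" using \<open>a < A\<close> by (intro mult_le_mono1) simp
  finally show ?thesis .
qed

lemma all_less_mult_iff:
  "(\<forall>p < A * B. P p) \<longleftrightarrow> (\<forall>a < A. \<forall>b < B. P (a * B + b))" for A B :: nat
proof safe
  fix p assume *: "\<forall>a<A. \<forall>b<B. P (a * B + b)" and "p < A * B"
  then have "B > 0" "p div B < A" by (auto simp: less_mult_imp_div_less intro: gr0I)
  then show "P p" using *[rule_format, of "p div B" "p mod B"] by simp
qed (simp add: mult_add_less)

lemma mult_add_eq_iff:
  fixes a b a' b' B :: nat
  assumes "b < B" and "b' < B"
  shows "a * B + b = a' * B + b' \<longleftrightarrow> a = a' \<and> b = b'"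
proof
  assume eq: "a * B + b = a' * B + b'"
  have "(a * B + b) div B = (a' * B + b') div B" "(a * B + b) mod B = (a' * B + b') mod B"
    using eq by simp_all
  with assms show "a = a' \<and> b = b'" by simp
qed simp

lemma nth_concat_equal_length:
  assumes "\<forall>x\<in>set xs. length (f x) = l" and "a < length xs" and "b < l"
  shows "concat (map f xs) ! (a * l + b) = f (xs ! a) ! b"
  using assms
proof (induction xs arbitrary: a)
  case (Cons x xs)
  then show ?case
    by (cases a) (auto simp: nth_append add.assoc)
qed simp

lemma length_tuples [simp]: "length (tuples n m) = n ^ m"
  by (induction m) (simp_all add: length_concat o_def sum_list_triv)

lemma in_set_tuples: "ts \<in> set (tuples n m) \<longleftrightarrow> length ts = m \<and> set ts \<subseteq> {..<n}"
proof (induction m arbitrary: ts)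
  case (Suc m)
  then show ?case by (cases ts) (auto simp: image_iff)
qed auto

lemma nth_tuples_Suc:
  assumes "a < n" and "b < n ^ m"
  shows "tuples n (Suc m) ! (a * n ^ m + b) = a # tuples n m ! b"
  using nth_concat_equal_length[of "[0..<n]" "\<lambda>i. map (Cons i) (tuples n m)"] assms by simp

fun tuple_rank :: "nat \<Rightarrow> nat list \<Rightarrow> nat" where
  "tuple_rank n [] = 0"
| "tuple_rank n (a # ts) = a * n ^ length ts + tuple_rank n ts"

lemma tuple_rank_append:
  "tuple_rank n (xs @ ys) = tuple_rank n xs * n ^ length ys + tuple_rank n ys"
  by (induction xs) (simp_all add: algebra_simps power_add)

lemma tuple_rank_take_drop:
  "length ts = a + b \<Longrightarrow> tuple_rank n ts = tuple_rank n (take a ts) * n ^ b + tuple_rank n (drop a ts)"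
  using tuple_rank_append[of n "take a ts" "drop a ts"] by simp

lemma tuple_rank_less: "set ts \<subseteq> {..<n} \<Longrightarrow> tuple_rank n ts < n ^ length ts"
proof (induction ts)
  case (Cons a ts)
  then show ?case using mult_add_less[of a n "tuple_rank n ts" "n ^ length ts"] by simp
qed simp

lemma nth_tuples_tuple_rank:
  "length ts = m \<Longrightarrow> set ts \<subseteq> {..<n} \<Longrightarrow> tuples n m ! tuple_rank n ts = ts"
proof (induction ts arbitrary: m)
  case (Cons a ts)
  then show ?case using nth_tuples_Suc tuple_rank_less by auto
qed simp

lemma tuple_rank_nth_tuples: "j < n ^ m \<Longrightarrow> tuple_rank n (tuples n m ! j) = j"
proof (induction m arbitrary: j)
  case (Suc m)
  then have "n > 0" by (cases n) auto
  with Suc.prems have div: "j div n ^ m < n" and mod: "j mod n ^ m < n ^ m"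
    by (auto simp: less_mult_imp_div_less)
  have "tuples n (Suc m) ! j = tuples n (Suc m) ! (j div n ^ m * n ^ m + j mod n ^ m)"
    by (simp only: div_mult_mod_eq)
  also have "\<dots> = j div n ^ m # tuples n m ! (j mod n ^ m)"
    using div mod by (rule nth_tuples_Suc)
  finally show ?case
    using Suc.IH[OF mod] mod in_set_tuples[of "tuples n m ! (j mod n ^ m)" n m]
    by (simp add: div_mult_mod_eq)
qed simp

lemma mem_nth_tuples_iff:
  "ts \<in> {tuples n m ! j | j. j < n ^ m \<and> P j} \<longleftrightarrow>
     length ts = m \<and> set ts \<subseteq> {..<n} \<and> P (tuple_rank n ts)"
  by (auto simp: tuple_rank_nth_tuples nth_tuples_tuple_rank
      dest: nth_mem[of _ "tuples n m", unfolded length_tuples in_set_tuples]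
      intro!: exI[of _ "tuple_rank n ts"] tuple_rank_less[of ts n, simplified])

lemma tuple_rank_inj:
  assumes "length xs = length ys" and "set xs \<subseteq> {..<n}" and "set ys \<subseteq> {..<n}"
    and "tuple_rank n xs = tuple_rank n ys"
  shows "xs = ys"
  using assms nth_tuples_tuple_rank by metis

lemma all_less_power_iff:
  "(\<forall>j < n ^ m. P j) \<longleftrightarrow> (\<forall>ts. length ts = m \<longrightarrow> set ts \<subseteq> {..<n} \<longrightarrow> P (tuple_rank n ts))"
  by (metis in_set_tuples length_tuples nth_mem tuple_rank_less tuple_rank_nth_tuples)

lemma mem_decode_inter:
  "i < k \<Longrightarrow> ts \<in> decode_inter n m k c i \<longleftrightarrow>
     length ts = m \<and> set ts \<subseteq> {..<n} \<and> c ! (tuple_rank n ts * k + i)"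
  unfolding decode_inter_def using mem_nth_tuples_iff by simp

lemma mem_decode_concat:
  "i < k \<Longrightarrow> ts \<in> decode_concat n m k c i \<longleftrightarrow>
     length ts = m \<and> set ts \<subseteq> {..<n} \<and> c ! (i * n ^ m + tuple_rank n ts)"
  unfolding decode_concat_def using mem_nth_tuples_iff by simp

text \<open>
  The rank \<open>n\<^sup>i - 1\<close> of \<open>thermo n k i\<close> is strictly increasing in \<open>i\<close> once \<open>n \<ge> 2\<close>; this is
  what lets a block of \<open>k\<close> coordinates name one of \<open>k\<close> relations in an order-preserving way.
\<close>

definition thermo :: "nat \<Rightarrow> nat \<Rightarrow> nat \<Rightarrow> nat list" where
  "thermo n k i = replicate (k - i) 0 @ replicate i (n - 1)"

lemma tuple_rank_replicate_zero: "tuple_rank n (replicate a 0) = 0"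
  by (induction a) simp_all

lemma tuple_rank_replicate_max: "tuple_rank n (replicate i (n - 1)) = n ^ i - 1"
proof (induction i)
  case (Suc i)
  then show ?case by (cases n) (simp_all add: algebra_simps power_0_left)
qed simp

lemma tuple_rank_thermo: "tuple_rank n (thermo n k i) = n ^ i - 1"
  unfolding thermo_def tuple_rank_append tuple_rank_replicate_zero tuple_rank_replicate_max
  by simp

lemma length_thermo: "i \<le> k \<Longrightarrow> length (thermo n k i) = k"
  by (simp add: thermo_def)

lemma set_thermo: "1 \<le> n \<Longrightarrow> set (thermo n k i) \<subseteq> {..<n}"
  by (auto simp: thermo_def)

lemma tuple_rank_eq_thermo_iff:
  assumes "1 \<le> n" and "i \<le> k" and "length xs = k" and "set xs \<subseteq> {..<n}"
  shows "tuple_rank n xs = n ^ i - 1 \<longleftrightarrow> xs = thermo n k i"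
proof
  assume "tuple_rank n xs = n ^ i - 1"
  then have "tuple_rank n xs = tuple_rank n (thermo n k i)"
    by (simp only: tuple_rank_thermo)
  then show "xs = thermo n k i"
    using assms set_thermo[OF assms(1)] length_thermo[OF assms(2)] by (intro tuple_rank_inj) simp_all
next
  assume "xs = thermo n k i"
  then show "tuple_rank n xs = n ^ i - 1" by (simp only: tuple_rank_thermo)
qed

lemma power_minus_one_less:
  fixes n :: nat
  assumes "1 \<le> n" and "i < k"
  shows "n ^ i - 1 < n ^ k"
proof -
  have "n ^ i \<le> n ^ k" and "1 \<le> n ^ k"
    using assms by (simp_all add: power_increasing)
  then show ?thesis by linarith
qed

definition blocks :: "nat \<Rightarrow> nat \<Rightarrow> (nat \<Rightarrow> nat \<Rightarrow> 'a) \<Rightarrow> 'a list" where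
  "blocks A B f = concat (map (\<lambda>a. map (f a) [0..<B]) [0..<A])"

lemma length_blocks [simp]: "length (blocks A B f) = A * B"
  by (simp add: blocks_def length_concat o_def sum_list_triv)

lemma nth_blocks: "a < A \<Longrightarrow> b < B \<Longrightarrow> blocks A B f ! (a * B + b) = f a b"
  unfolding blocks_def
  using nth_concat_equal_length[of "[0..<A]" "\<lambda>a. map (f a) [0..<B]" B a b] by simp

lemma set_blocks: "set (blocks A B f) = {f a b | a b. a < A \<and> b < B}"
  by (auto simp: blocks_def) blast

lemma sorted_wrt_blocks:
  assumes "\<And>a a' b b'. a < A \<Longrightarrow> a' < A \<Longrightarrow> b < B \<Longrightarrow> b' < B \<Longrightarrow>
      a < a' \<or> (a = a' \<and> b < b') \<Longrightarrow> f a b < f a' b'"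
  shows "sorted_wrt (<) (blocks A B f)"
  using assms
proof (induction A)
  case (Suc A)
  have "blocks (Suc A) B f = blocks A B f @ map (f A) [0..<B]"
    by (simp add: blocks_def)
  moreover have "sorted_wrt (<) (map (f A) [0..<B])"
    unfolding sorted_wrt_map by (rule sorted_wrt_mono_rel[OF _ sorted_wrt_upt]) (simp add: Suc.prems)
  ultimately show ?case
    using Suc by (auto simp: sorted_wrt_append set_blocks)
qed (simp add: blocks_def)

section \<open>Neutral letters and supported bit strings\<close>

lemma in_set_bitstrings: "c \<in> set (bitstrings l) \<longleftrightarrow> length c = l"
proof (induction l arbitrary: c)
  case (Suc l)
  then show ?case by (cases c) auto
qed auto

definition supported_on :: "nat set \<Rightarrow> bool list \<Rightarrow> bool" where
  "supported_on A c \<longleftrightarrow> (\<forall>p < length c. c ! p \<longrightarrow> p \<in> A)"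

lemma supported_on_Cons:
  "supported_on A (x # c) \<longleftrightarrow> (x \<longrightarrow> 0 \<in> A) \<and> supported_on {j. Suc j \<in> A} c"
  by (auto simp: supported_on_def nth_Cons' less_Suc_eq_0_disj)

lemma card_less_Suc:
  "card {p \<in> A. p < Suc l} = (if 0 \<in> A then 1 else 0) + card {p \<in> {j. Suc j \<in> A}. p < l}"
proof -
  have "{p \<in> A. p < Suc l} = (if 0 \<in> A then {0} else {}) \<union> Suc ` {p \<in> {j. Suc j \<in> A}. p < l}"
    by (auto simp: image_iff less_Suc_eq_0_disj)
  then show ?thesis by (simp add: card_image)
qed

lemma bitstrings_supported_on:
  "map (\<lambda>c. nths c A) (filter (supported_on A) (bitstrings l)) = bitstrings (card {p \<in> A. p < l})"
proof (induction l arbitrary: A)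
  case 0
  then show ?case by (simp add: supported_on_def)
next
  case (Suc l)
  define A' where "A' = {j. Suc j \<in> A}"
  have IH: "map (\<lambda>c. b # nths c A') (filter (supported_on A') (bitstrings l)) =
      map (Cons b) (bitstrings (card {p \<in> A'. p < l}))" for b
    using arg_cong[OF Suc.IH[of A'], of "map (Cons b)"] by (simp add: o_def)
  show ?case
    unfolding card_less_Suc A'_def[symmetric]
    by (simp add: supported_on_Cons nths_Cons filter_map o_def IH Suc.IH flip: A'_def)
qed

lemma nths_eq_map_nth: "nths xs A = map (nth xs) (filter (\<lambda>i. i \<in> A) [0..<length xs])"
proof (induction xs rule: rev_induct)
  case (snoc x xs)
  have "map (nth (xs @ [x])) (filter (\<lambda>i. i \<in> A) [0..<length xs]) =
      map (nth xs) (filter (\<lambda>i. i \<in> A) [0..<length xs])"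
    by (rule map_cong) (auto simp: nth_append)
  then show ?case using snoc by (simp add: nths_append)
qed simp

lemma nths_set_sorted:
  assumes "sorted_wrt (<) ps" and "set ps \<subseteq> {..<length xs}"
  shows "nths xs (set ps) = map (nth xs) ps"
proof -
  have "filter (\<lambda>i. i \<in> set ps) [0..<length xs] = ps"
    using assms by (intro sorted_distinct_set_unique)
      (auto simp: strict_sorted_iff intro: sorted_wrt_filter)
  then show ?thesis by (simp add: nths_eq_map_nth)
qed

lemma neutral_letter_filter:
  assumes "neutral_letter L s e" and "set x \<subseteq> {..<s}"
  shows "filter (\<lambda>y. y \<noteq> e) x \<in> L \<longleftrightarrow> x \<in> L"
proof -
  have "u @ filter (\<lambda>y. y \<noteq> e) x \<in> L \<longleftrightarrow> u @ x \<in> L" if "set u \<subseteq> {..<s}" for u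
    using assms(2) that
  proof (induction x arbitrary: u)
    case (Cons a x)
    show ?case
    proof (cases "a = e")
      case True
      have "u @ x \<in> L \<longleftrightarrow> u @ [e] @ x \<in> L"
        using assms(1) Cons.prems unfolding neutral_letter_def by simp
      then show ?thesis using Cons True by simp
    next
      case False
      then show ?thesis using Cons.IH[of "u @ [a]"] Cons.prems by simp
    qed
  qed simp
  from this[of "[]"] show ?thesis by simp
qed

lemma filter_map_filter:
  "\<forall>x\<in>set xs. \<not> Q x \<longrightarrow> \<not> P (f x) \<Longrightarrow> filter P (map f (filter Q xs)) = filter P (map f xs)"
  by (induction xs) auto

lemma neutral_letter_bitstrings_transfer:
  assumes neutral: "neutral_letter L s e"
    and sorted: "sorted_wrt (<) ps" and bounded: "set ps \<subseteq> {..<l}"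
    and F: "\<And>c. length c = l \<Longrightarrow>
      F c = (if supported_on (set ps) c then G (map (nth c) ps) else e)"
    and F_less: "\<And>c. F c < s" and G_less: "\<And>c. G c < s"
  shows "map F (bitstrings l) \<in> L \<longleftrightarrow> map G (bitstrings (length ps)) \<in> L"
proof -
  let ?drop_e = "filter (\<lambda>y. y \<noteq> e)"
  let ?supp = "filter (supported_on (set ps)) (bitstrings l)"
  have "?drop_e (map F (bitstrings l)) = ?drop_e (map F ?supp)"
    using F by (intro filter_map_filter[symmetric]) (simp add: in_set_bitstrings)
  also have "map F ?supp = map G (map (\<lambda>c. nths c (set ps)) ?supp)"
    using F sorted bounded by (auto simp: in_set_bitstrings nths_set_sorted)
  also have "map (\<lambda>c. nths c (set ps)) ?supp = bitstrings (length ps)"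
  proof -
    have "{p \<in> set ps. p < l} = set ps" using bounded by auto
    then show ?thesis
      using bitstrings_supported_on[of "set ps" l] sorted
      by (simp add: distinct_card strict_sorted_iff)
  qed
  finally have eq: "?drop_e (map F (bitstrings l)) = ?drop_e (map G (bitstrings (length ps)))" .
  have F_word: "set (map F (bitstrings l)) \<subseteq> {..<s}"
    and G_word: "set (map G (bitstrings (length ps))) \<subseteq> {..<s}"
    using F_less G_less by auto
  show ?thesis
    using neutral_letter_filter[OF neutral F_word] neutral_letter_filter[OF neutral G_word] eq
    by simp
qed

section \<open>Formula combinators\<close>

definition truth :: fo where
  "truth = Eq MinT MinT"

definition falsity :: fo where
  "falsity = Neg truth"

fun conjs :: "fo list \<Rightarrow> fo" where
  "conjs [] = truth"
| "conjs (p # ps) = Conj p (conjs ps)"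

fun disjs :: "fo list \<Rightarrow> fo" where
  "disjs [] = falsity"
| "disjs (p # ps) = Disj p (disjs ps)"

fun alls :: "nat list \<Rightarrow> fo \<Rightarrow> fo" where
  "alls [] p = p"
| "alls (x # xs) p = All x (alls xs p)"

fun upds :: "(nat \<Rightarrow> nat) \<Rightarrow> nat list \<Rightarrow> nat list \<Rightarrow> nat \<Rightarrow> nat" where
  "upds v (x # xs) (t # ts) = upds (v(x := t)) xs ts"
| "upds v _ _ = v"

lemma sat_truth [simp]: "sat w R v truth"
  and sat_falsity [simp]: "\<not> sat w R v falsity"
  and fv_truth [simp]: "fv truth = {}"
  and fv_falsity [simp]: "fv falsity = {}"
  and wf_truth [simp]: "wf t m k truth"
  and wf_falsity [simp]: "wf t m k falsity"
  by (simp_all add: truth_def falsity_def)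

lemma sat_conjs [simp]: "sat w R v (conjs ps) \<longleftrightarrow> (\<forall>p\<in>set ps. sat w R v p)"
  and fv_conjs [simp]: "fv (conjs ps) = (\<Union>p\<in>set ps. fv p)"
  and wf_conjs [simp]: "wf t m k (conjs ps) \<longleftrightarrow> (\<forall>p\<in>set ps. wf t m k p)"
  by (induction ps) auto

lemma sat_disjs [simp]: "sat w R v (disjs ps) \<longleftrightarrow> (\<exists>p\<in>set ps. sat w R v p)"
  and fv_disjs [simp]: "fv (disjs ps) = (\<Union>p\<in>set ps. fv p)"
  and wf_disjs [simp]: "wf t m k (disjs ps) \<longleftrightarrow> (\<forall>p\<in>set ps. wf t m k p)"
  by (induction ps) auto

lemma fv_alls [simp]: "fv (alls xs p) = fv p - set xs"
  and wf_alls [simp]: "wf t m k (alls xs p) \<longleftrightarrow> wf t m k p"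
  by (induction xs) auto

lemma all_length_Suc_iff:
  "(\<forall>ts. length ts = Suc n \<longrightarrow> set ts \<subseteq> S \<longrightarrow> P ts) \<longleftrightarrow>
     (\<forall>t\<in>S. \<forall>ts. length ts = n \<longrightarrow> set ts \<subseteq> S \<longrightarrow> P (t # ts))"
proof
  assume "\<forall>t\<in>S. \<forall>ts. length ts = n \<longrightarrow> set ts \<subseteq> S \<longrightarrow> P (t # ts)"
  then show "\<forall>ts. length ts = Suc n \<longrightarrow> set ts \<subseteq> S \<longrightarrow> P ts"
    by (auto simp: length_Suc_conv)
qed simp

lemma sat_alls:
  "sat w R v (alls xs p) \<longleftrightarrow>
     (\<forall>ts. length ts = length xs \<longrightarrow> set ts \<subseteq> {..<length w} \<longrightarrow> sat w R (upds v xs ts) p)"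
proof (induction xs arbitrary: v)
  case (Cons x xs)
  have "sat w R v (alls (x # xs) p) \<longleftrightarrow>
      (\<forall>t < length w. \<forall>ts. length ts = length xs \<longrightarrow> set ts \<subseteq> {..<length w} \<longrightarrow>
         sat w R (upds v (x # xs) (t # ts)) p)"
    using Cons.IH by (simp del: fun_upd_apply)
  also have "\<dots> \<longleftrightarrow> (\<forall>ts. length ts = length (x # xs) \<longrightarrow> set ts \<subseteq> {..<length w} \<longrightarrow>
      sat w R (upds v (x # xs) ts) p)"
    unfolding length_Cons all_length_Suc_iff by auto
  finally show ?case .
qed simp

lemma upds_notin: "y \<notin> set xs \<Longrightarrow> upds v xs ts y = v y"
  by (induction v xs ts rule: upds.induct) auto

lemma map_upds: "distinct xs \<Longrightarrow> length ts = length xs \<Longrightarrow> map (upds v xs ts) xs = ts"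
  by (induction v xs ts rule: upds.induct) (auto simp: upds_notin)

lemma upds_upt: "length ts = r \<Longrightarrow> l < r \<Longrightarrow> upds v [0..<r] ts l = ts ! l"
  using map_upds[of "[0..<r]" ts v] nth_map[of l "[0..<r]" "upds v [0..<r] ts"] by simp

lemma sat_alls_Imp_Rel:
  "sat w R v (alls [0..<r] (Imp (Rel i (map Var [0..<r])) p)) \<longleftrightarrow>
     (\<forall>ts. length ts = r \<longrightarrow> set ts \<subseteq> {..<length w} \<longrightarrow> ts \<in> R i \<longrightarrow>
        sat w R (upds v [0..<r] ts) p)"
proof -
  have "map (tval w (upds v [0..<r] ts)) (map Var [0..<r]) = ts" if "length ts = r" for ts
    using map_upds[of "[0..<r]" ts v] that by (simp add: comp_def)
  then show ?thesis unfolding sat_alls by auto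
qed

definition eqs_at :: "nat \<Rightarrow> trm list \<Rightarrow> fo" where
  "eqs_at d es = conjs (map (\<lambda>l. Eq (Var (d + l)) (es ! l)) [0..<length es])"

lemma sat_eqs_at_upds:
  assumes "length ts = r" and "d + length es \<le> r"
  shows "sat w R (upds v [0..<r] ts) (eqs_at d es) \<longleftrightarrow>
    take (length es) (drop d ts) = map (tval w (upds v [0..<r] ts)) es"
proof -
  let ?u = "upds v [0..<r] ts"
  have "sat w R ?u (eqs_at d es) \<longleftrightarrow> (\<forall>l<length es. ?u (d + l) = tval w ?u (es ! l))"
    by (auto simp: eqs_at_def)
  also have "\<dots> \<longleftrightarrow> (\<forall>l<length es. ts ! (d + l) = tval w ?u (es ! l))"
    using assms by (simp add: upds_upt)
  also have "\<dots> \<longleftrightarrow> take (length es) (drop d ts) = map (tval w ?u) es"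
    using assms by (simp add: list_eq_iff_nth_eq)
  finally show ?thesis .
qed

lemma wf_eqs_at [simp]: "wf t m k (eqs_at d es)"
  by (simp add: eqs_at_def)

lemma fv_eqs_at_subset:
  "\<forall>e\<in>set es. fvt e = {} \<Longrightarrow> fv (eqs_at d es) \<subseteq> {d..<d + length es}"
  by (auto simp: eqs_at_def)

definition thermo_terms :: "nat \<Rightarrow> nat \<Rightarrow> trm list" where
  "thermo_terms k i = replicate (k - i) MinT @ replicate i MaxT"

lemma map_tval_thermo_terms: "map (tval w v) (thermo_terms k i) = thermo (length w) k i"
  by (simp add: thermo_terms_def thermo_def)

lemma length_thermo_terms [simp]: "i \<le> k \<Longrightarrow> length (thermo_terms k i) = k"
  by (simp add: thermo_terms_def)

lemma fvt_thermo_terms: "\<forall>e\<in>set (thermo_terms k i). fvt e = {}"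
  by (auto simp: thermo_terms_def)

section \<open>Relativizing a quantifier to a guard\<close>

fun subst_rel :: "(nat \<Rightarrow> trm list \<Rightarrow> fo) \<Rightarrow> fo \<Rightarrow> fo" where
  "subst_rel \<rho> (Rel X ts) = \<rho> X ts"
| "subst_rel \<rho> (Neg p) = Neg (subst_rel \<rho> p)"
| "subst_rel \<rho> (Conj p q) = Conj (subst_rel \<rho> p) (subst_rel \<rho> q)"
| "subst_rel \<rho> (Disj p q) = Disj (subst_rel \<rho> p) (subst_rel \<rho> q)"
| "subst_rel \<rho> (Imp p q) = Imp (subst_rel \<rho> p) (subst_rel \<rho> q)"
| "subst_rel \<rho> (Ex x p) = Ex x (subst_rel \<rho> p)"
| "subst_rel \<rho> (All x p) = All x (subst_rel \<rho> p)"
| "subst_rel \<rho> p = p"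

lemma wf_subst_rel:
  "wf t m k p \<Longrightarrow> (\<And>i ts. i < k \<Longrightarrow> length ts = m \<Longrightarrow> wf t m' k' (\<rho> i ts)) \<Longrightarrow>
     wf t m' k' (subst_rel \<rho> p)"
  by (induction p) auto

lemma fv_subst_rel:
  "(\<And>i ts. fv (\<rho> i ts) = (\<Union>x\<in>set ts. fvt x)) \<Longrightarrow> fv (subst_rel \<rho> p) = fv p"
  by (induction p) auto

lemma sat_subst_rel:
  "wf t m k p \<Longrightarrow>
   (\<And>i ts v. i < k \<Longrightarrow> length ts = m \<Longrightarrow> sat w R' v (\<rho> i ts) \<longleftrightarrow> map (tval w v) ts \<in> R i) \<Longrightarrow>
   sat w R' v (subst_rel \<rho> p) \<longleftrightarrow> sat w R v p"
  by (induction p arbitrary: v) auto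

definition guarded_translation :: "fo \<Rightarrow> (nat \<Rightarrow> trm list \<Rightarrow> fo) \<Rightarrow> nat \<Rightarrow> fo list \<Rightarrow> fo list" where
  "guarded_translation G \<rho> e phis =
     map (\<lambda>j. if j = e then Disj (Neg G) (subst_rel \<rho> (phis ! j)) else Conj G (subst_rel \<rho> (phis ! j)))
       [0..<length phis]"

lemma length_guarded_translation [simp]: "length (guarded_translation G \<rho> e phis) = length phis"
  by (simp add: guarded_translation_def)

lemma letter_less_eq: "letter w R phis \<le> length phis"
  unfolding letter_def by (auto intro: Least_le[THEN order.trans])

lemma letter_eqI:
  assumes "j \<le> length phis" and "j < length phis \<Longrightarrow> sat w R (\<lambda>_. 0) (phis ! j)"
    and "\<And>i. i < j \<Longrightarrow> \<not> sat w R (\<lambda>_. 0) (phis ! i)"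
  shows "letter w R phis = j"
proof (cases "j = length phis")
  case True
  then show ?thesis using assms(3) by (auto simp: letter_def)
next
  case False
  with assms(1) have "j < length phis" by simp
  moreover have "(LEAST i. i < length phis \<and> sat w R (\<lambda>_. 0) (phis ! i)) = j"
    using assms \<open>j < length phis\<close> by (intro Least_equality) (auto simp: not_less[symmetric])
  ultimately show ?thesis using assms(2) by (auto simp: letter_def)
qed

lemma letter_cong:
  assumes "length psis = length phis"
    and "\<forall>j<length phis. sat w R' (\<lambda>_. 0) (psis ! j) \<longleftrightarrow> sat w R (\<lambda>_. 0) (phis ! j)"
  shows "letter w R' psis = letter w R phis"
proof -
  have eq: "(\<lambda>j. j < length phis \<and> sat w R' (\<lambda>_. 0) (psis ! j)) =
      (\<lambda>j. j < length phis \<and> sat w R (\<lambda>_. 0) (phis ! j))"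
    using assms(2) by auto
  show ?thesis unfolding letter_def assms(1) eq ..
qed

lemma letter_guarded_translation:
  assumes "e \<le> length phis"
    and "sat w R' (\<lambda>_. 0) G \<Longrightarrow>
      \<forall>j<length phis. sat w R' (\<lambda>_. 0) (subst_rel \<rho> (phis ! j)) \<longleftrightarrow> sat w R (\<lambda>_. 0) (phis ! j)"
  shows "letter w R' (guarded_translation G \<rho> e phis) =
    (if sat w R' (\<lambda>_. 0) G then letter w R phis else e)"
proof (cases "sat w R' (\<lambda>_. 0) G")
  case True
  then have "letter w R' (guarded_translation G \<rho> e phis) = letter w R phis"
    using assms(2) by (intro letter_cong) (auto simp: guarded_translation_def)
  then show ?thesis using True by simp
next
  case False
  then have "letter w R' (guarded_translation G \<rho> e phis) = e"
    using assms(1) by (intro letter_eqI) (auto simp: guarded_translation_def)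
  then show ?thesis using False by simp
qed

lemma qsentence_guarded_translation:
  assumes "qsentence t s m k phis" and "1 \<le> m'" and "1 \<le> k'"
    and "wf t m' k' G" and "fv G = {}"
    and "\<And>i ts. i < k \<Longrightarrow> length ts = m \<Longrightarrow> wf t m' k' (\<rho> i ts)"
    and "\<And>i ts. fv (\<rho> i ts) = (\<Union>x\<in>set ts. fvt x)"
  shows "qsentence t s m' k' (guarded_translation G \<rho> e phis)"
proof -
  have "\<forall>j<length phis. wf t m k (phis ! j) \<and> fv (phis ! j) = {}" and "length phis = s - 1"
    using assms(1) by (simp_all add: qsentence_def)
  then show ?thesis
    unfolding qsentence_def using assms(2-)
    by (auto simp: guarded_translation_def fv_subst_rel intro!: wf_subst_rel)
qed

lemma qsem_guarded_translation:
  fixes dec dec' :: "nat \<Rightarrow> nat \<Rightarrow> nat \<Rightarrow> bool list \<Rightarrow> nat \<Rightarrow> nat list set"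
    and w :: "nat list"
  defines "n \<equiv> length w"
  assumes neutral: "neutral_letter L s e" and "e \<le> length phis" and "length phis < s"
    and wf: "\<forall>\<phi>\<in>set phis. wf t m k \<phi>"
    and sorted: "sorted_wrt (<) ps" and bounded: "set ps \<subseteq> {..<n ^ m' * k'}"
    and length_ps: "length ps = n ^ m * k"
    and guard: "\<And>c. length c = n ^ m' * k' \<Longrightarrow>
      sat w (dec' n m' k' c) (\<lambda>_. 0) G \<longleftrightarrow> supported_on (set ps) c"
    and atom: "\<And>c i ts v. length c = n ^ m' * k' \<Longrightarrow> supported_on (set ps) c \<Longrightarrow>
      i < k \<Longrightarrow> length ts = m \<Longrightarrow>
      sat w (dec' n m' k' c) v (\<rho> i ts) \<longleftrightarrow> map (tval w v) ts \<in> dec n m k (map (nth c) ps) i"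
  shows "qsem dec' L m' k' (guarded_translation G \<rho> e phis) w \<longleftrightarrow> qsem dec L m k phis w"
proof -
  define F where "F c = letter w (dec' n m' k' c) (guarded_translation G \<rho> e phis)" for c
  define H where "H c = letter w (dec n m k c) phis" for c
  have F: "F c = (if supported_on (set ps) c then H (map (nth c) ps) else e)"
    if "length c = n ^ m' * k'" for c
  proof -
    have "sat w (dec' n m' k' c) (\<lambda>_. 0) (subst_rel \<rho> \<phi>) \<longleftrightarrow>
        sat w (dec n m k (map (nth c) ps)) (\<lambda>_. 0) \<phi>"
      if "\<phi> \<in> set phis" and "supported_on (set ps) c" for \<phi>
      using wf that \<open>length c = _\<close> by (intro sat_subst_rel[of t m k]) (auto simp: atom)
    then show ?thesis
      unfolding F_def H_def using guard[OF that] \<open>e \<le> length phis\<close>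
      by (subst letter_guarded_translation) auto
  qed
  have F_less: "F c < s" and H_less: "H c < s" for c
    using letter_less_eq[THEN le_less_trans] \<open>length phis < s\<close> unfolding F_def H_def
    by simp_all
  have "map F (bitstrings (n ^ m' * k')) \<in> L \<longleftrightarrow> map H (bitstrings (length ps)) \<in> L"
    using neutral sorted bounded F F_less H_less by (rule neutral_letter_bitstrings_transfer)
  then show ?thesis
    unfolding qsem_def F_def H_def length_ps n_def .
qed

section \<open>Concatenated codes in interleaved form\<close>

definition prefix_atom :: "nat \<Rightarrow> nat \<Rightarrow> trm list \<Rightarrow> fo" where
  "prefix_atom k i ts = Rel i (thermo_terms k i @ ts)"

definition prefix_guard :: "nat \<Rightarrow> nat \<Rightarrow> fo" where
  "prefix_guard k m = conjs (map (\<lambda>i.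
     alls [0..<k + m] (Imp (Rel i (map Var [0..<k + m])) (eqs_at 0 (thermo_terms k i)))) [0..<k])"

text \<open>
  Bit \<open>j\<close> of \<open>X\<^sub>i\<close> in the concatenated code corresponds to \<open>Y\<^sub>i\<close> holding the tuple
  \<open>thermo i @ t\<^sub>j\<close> of rank \<open>(n\<^sup>i - 1) n\<^sup>m + j\<close>, i.e. to that bit of the interleaved code.
\<close>

definition prefix_positions :: "nat \<Rightarrow> nat \<Rightarrow> nat \<Rightarrow> nat list" where
  "prefix_positions n m k = blocks k (n ^ m) (\<lambda>i j. ((n ^ i - 1) * n ^ m + j) * k + i)"

lemma length_prefix_positions [simp]: "length (prefix_positions n m k) = n ^ m * k"
  by (simp add: prefix_positions_def)

lemma sat_prefix_guard:
  "sat w (decode_inter (length w) (k + m) k c) v (prefix_guard k m) \<longleftrightarrow>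
     (\<forall>i<k. \<forall>ts. length ts = k + m \<longrightarrow> set ts \<subseteq> {..<length w} \<longrightarrow>
        c ! (tuple_rank (length w) ts * k + i) \<longrightarrow> take k ts = thermo (length w) k i)"
  by (auto simp: prefix_guard_def sat_alls_Imp_Rel mem_decode_inter sat_eqs_at_upds
      map_tval_thermo_terms)

lemma prefix_rank_mono:
  fixes n :: nat
  assumes "1 \<le> n" and "i < i'" and "j < n ^ m"
  shows "(n ^ i - 1) * n ^ m + j \<le> (n ^ i' - 1) * n ^ m + j'"
proof (cases "n = 1")
  case False
  with assms have "n ^ i - 1 < n ^ i' - 1"
    by (simp add: diff_less_mono power_strict_increasing)
  then have "(n ^ i - 1) * n ^ m + j < (n ^ i' - 1) * n ^ m"
    using assms(3) by (rule mult_add_less)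
  then show ?thesis by simp
qed (use assms in simp)

lemma sorted_prefix_positions: "1 \<le> n \<Longrightarrow> sorted_wrt (<) (prefix_positions n m k)"
  unfolding prefix_positions_def
proof (rule sorted_wrt_blocks)
  fix i i' j j' assume "1 \<le> n" "i < k" "i' < k" "j < n ^ m" "j' < n ^ m"
    and "i < i' \<or> (i = i' \<and> j < j')"
  then consider "i < i'" | "i = i'" "j < j'" by blast
  then show "((n ^ i - 1) * n ^ m + j) * k + i < ((n ^ i' - 1) * n ^ m + j') * k + i'"
  proof cases
    case 1
    then have "((n ^ i - 1) * n ^ m + j) * k \<le> ((n ^ i' - 1) * n ^ m + j') * k"
      using prefix_rank_mono \<open>1 \<le> n\<close> \<open>j < n ^ m\<close> by (intro mult_le_mono1) blast
    with 1 show ?thesis by linarith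
  next
    case 2
    then show ?thesis
      using mult_add_less[of "(n ^ i - 1) * n ^ m + j" "(n ^ i' - 1) * n ^ m + j'" i k] \<open>i < k\<close>
      by simp
  qed
qed

lemma prefix_positions_less:
  assumes "1 \<le> n"
  shows "set (prefix_positions n m k) \<subseteq> {..<n ^ (k + m) * k}"
proof
  fix p assume "p \<in> set (prefix_positions n m k)"
  then obtain i j where "i < k" "j < n ^ m" and p: "p = ((n ^ i - 1) * n ^ m + j) * k + i"
    by (auto simp: prefix_positions_def set_blocks)
  then have "(n ^ i - 1) * n ^ m + j < n ^ k * n ^ m"
    using assms power_minus_one_less by (intro mult_add_less) auto
  then show "p \<in> {..<n ^ (k + m) * k}"
    using p \<open>i < k\<close> by (simp add: mult_add_less power_add)
qed

lemma mem_prefix_positions: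
  assumes "1 \<le> n" and "i < k" and "length ts = k + m" and "set ts \<subseteq> {..<n}"
  shows "tuple_rank n ts * k + i \<in> set (prefix_positions n m k) \<longleftrightarrow> take k ts = thermo n k i"
proof -
  have ts: "tuple_rank n ts = tuple_rank n (take k ts) * n ^ m + tuple_rank n (drop k ts)"
    and drop: "tuple_rank n (drop k ts) < n ^ m"
    using assms(3,4) tuple_rank_take_drop tuple_rank_less[of "drop k ts" n]
    by (auto dest: in_set_dropD)
  have "tuple_rank n ts * k + i \<in> set (prefix_positions n m k) \<longleftrightarrow>
      (\<exists>j<n ^ m. tuple_rank n ts = (n ^ i - 1) * n ^ m + j)"
    using assms(2) by (auto simp: prefix_positions_def set_blocks mult_add_eq_iff) blast
  also have "\<dots> \<longleftrightarrow> tuple_rank n (take k ts) = n ^ i - 1"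
    using drop by (auto simp: ts mult_add_eq_iff)
  also have "\<dots> \<longleftrightarrow> take k ts = thermo n k i"
    using assms by (intro tuple_rank_eq_thermo_iff) (auto dest: in_set_takeD)
  finally show ?thesis .
qed

lemma supported_on_prefix_positions:
  assumes "1 \<le> n" and "length c = n ^ (k + m) * k"
  shows "supported_on (set (prefix_positions n m k)) c \<longleftrightarrow>
    (\<forall>i<k. \<forall>ts. length ts = k + m \<longrightarrow> set ts \<subseteq> {..<n} \<longrightarrow>
       c ! (tuple_rank n ts * k + i) \<longrightarrow> take k ts = thermo n k i)"
  using assms
  by (auto simp: supported_on_def all_less_mult_iff all_less_power_iff mem_prefix_positions)

lemma sat_prefix_atom:
  assumes "w \<noteq> []" and "i < k" and "length ts = m"
  shows "sat w (decode_inter (length w) (k + m) k c) v (prefix_atom k i ts) \<longleftrightarrow>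
    map (tval w v) ts \<in> decode_concat (length w) m k (map (nth c) (prefix_positions (length w) m k)) i"
proof -
  let ?n = "length w" and ?t = "map (tval w v) ts"
  have "1 \<le> ?n" using assms(1) by (simp add: Suc_leI)
  have "map (nth c) (prefix_positions ?n m k) ! (i * ?n ^ m + tuple_rank ?n ?t) =
      c ! (((?n ^ i - 1) * ?n ^ m + tuple_rank ?n ?t) * k + i)"
    if "set ?t \<subseteq> {..<?n}"
    using that assms tuple_rank_less[of ?t ?n] mult_add_less[of i k]
    by (simp add: prefix_positions_def nth_blocks mult.commute[of k])
  then show ?thesis
    using assms \<open>1 \<le> ?n\<close>
    by (auto simp: prefix_atom_def mem_decode_inter mem_decode_concat map_tval_thermo_terms
        tuple_rank_append tuple_rank_thermo length_thermo set_thermo)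
qed

lemma qsentence_prefix_translation:
  assumes "qsentence t s m k phis"
  shows "qsentence t s (k + m) k (guarded_translation (prefix_guard k m) (prefix_atom k) e phis)"
proof (rule qsentence_guarded_translation[OF assms])
  have "fv (eqs_at 0 (thermo_terms k i)) \<subseteq> {0..<k + m}" if "i < k" for i
    using order_trans[OF fv_eqs_at_subset[OF fvt_thermo_terms, of 0 k i]] that by auto
  then show "fv (prefix_guard k m) = {}"
    unfolding prefix_guard_def by (auto simp: UN_subset_iff dest!: subsetD)
qed (use assms in \<open>auto simp: qsentence_def prefix_guard_def prefix_atom_def fvt_thermo_terms\<close>)

lemma qsem_prefix_translation:
  assumes "neutral_letter L s e" and "e < s" and "qsentence t s m k phis" and "w \<noteq> []"
  shows "qsem_inter L (k + m) k (guarded_translation (prefix_guard k m) (prefix_atom k) e phis) w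
    \<longleftrightarrow> qsem_concat L m k phis w"
proof -
  have "1 \<le> length w" using assms(4) by (simp add: Suc_leI)
  show ?thesis
  proof (rule qsem_guarded_translation[OF assms(1)])
    show "e \<le> length phis" "length phis < s" "\<forall>\<phi>\<in>set phis. wf t m k \<phi>"
      using assms(2,3) by (auto simp: qsentence_def)
  qed (use \<open>1 \<le> length w\<close> assms(4) in \<open>simp_all add: sorted_prefix_positions
        prefix_positions_less sat_prefix_guard supported_on_prefix_positions sat_prefix_atom\<close>)
qed

section \<open>Interleaved codes in concatenated form\<close>

definition universe_singleton :: fo where
  "universe_singleton = Eq MinT MaxT"

lemma sat_universe_singleton [simp]: "sat w R v universe_singleton \<longleftrightarrow> length w \<le> 1"
  by (auto simp: universe_singleton_def)

text \<open>
  \<open>X\<^sub>i(t)\<close> is stored as \<open>Y\<^sub>0(t @ thermo i)\<close>, at bit \<open>rank t \<cdot> n\<^sup>k + n\<^sup>i - 1\<close> of the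
  concatenated code. Over a one-element universe all thermometer tuples coincide, so there
  \<open>X\<^sub>i\<close> is stored in \<open>Y\<^sub>i\<close> instead, at bit \<open>i\<close>.
\<close>

definition suffix_atom :: "nat \<Rightarrow> nat \<Rightarrow> trm list \<Rightarrow> fo" where
  "suffix_atom k i ts =
     Disj (Conj universe_singleton (Rel i (ts @ thermo_terms k i)))
       (Conj (Neg universe_singleton) (Rel 0 (ts @ thermo_terms k i)))"

definition suffix_guard :: "nat \<Rightarrow> nat \<Rightarrow> fo" where
  "suffix_guard k m = Disj universe_singleton (conjs (map (\<lambda>i'.
     alls [0..<m + k] (Imp (Rel i' (map Var [0..<m + k]))
       (if i' = 0 then disjs (map (\<lambda>i. eqs_at m (thermo_terms k i)) [0..<k]) else falsity)))
     [0..<k]))"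

definition suffix_position :: "nat \<Rightarrow> nat \<Rightarrow> nat \<Rightarrow> nat \<Rightarrow> nat" where
  "suffix_position n k j i = (if n = 1 then i else j * n ^ k + (n ^ i - 1))"

definition suffix_positions :: "nat \<Rightarrow> nat \<Rightarrow> nat \<Rightarrow> nat list" where
  "suffix_positions n m k = blocks (n ^ m) k (suffix_position n k)"

lemma length_suffix_positions [simp]: "length (suffix_positions n m k) = n ^ m * k"
  by (simp add: suffix_positions_def)

lemma sat_suffix_guard:
  assumes "w \<noteq> []"
  shows "sat w (decode_concat (length w) (m + k) k c) v (suffix_guard k m) \<longleftrightarrow>
    length w = 1 \<or>
    (\<forall>i'<k. \<forall>ts. length ts = m + k \<longrightarrow> set ts \<subseteq> {..<length w} \<longrightarrow>
       c ! (i' * length w ^ (m + k) + tuple_rank (length w) ts) \<longrightarrow>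
       i' = 0 \<and> (\<exists>i<k. drop m ts = thermo (length w) k i))"
proof -
  let ?n = "length w"
  have clause: "sat w (decode_concat ?n (m + k) k c) v (alls [0..<m + k] (Imp (Rel i' (map Var [0..<m + k]))
       (if i' = 0 then disjs (map (\<lambda>i. eqs_at m (thermo_terms k i)) [0..<k]) else falsity))) \<longleftrightarrow>
    (\<forall>ts. length ts = m + k \<longrightarrow> set ts \<subseteq> {..<?n} \<longrightarrow>
       c ! (i' * ?n ^ (m + k) + tuple_rank ?n ts) \<longrightarrow>
       i' = 0 \<and> (\<exists>i<k. drop m ts = thermo ?n k i))" if "i' < k" for i'
    using that by (cases "i' = 0")
      (auto simp: sat_alls_Imp_Rel mem_decode_concat sat_eqs_at_upds map_tval_thermo_terms
        atLeast0LessThan)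
  have "?n \<le> 1 \<longleftrightarrow> ?n = 1" using assms by (cases w) auto
  then show ?thesis
    unfolding suffix_guard_def by (simp add: clause atLeast0LessThan, simp add: Ball_def)
qed

lemma suffix_position_less_power:
  assumes "2 \<le> n" and "j < n ^ m" and "i < k"
  shows "suffix_position n k j i < n ^ (m + k)"
proof -
  have "j * n ^ k + (n ^ i - 1) < n ^ m * n ^ k"
    using assms power_minus_one_less[of n i k] by (intro mult_add_less) auto
  then show ?thesis using assms(1) by (simp add: suffix_position_def power_add)
qed

lemma sorted_suffix_positions: "1 \<le> n \<Longrightarrow> sorted_wrt (<) (suffix_positions n m k)"
  unfolding suffix_positions_def
proof (rule sorted_wrt_blocks)
  fix j j' i i' assume "1 \<le> n" "j < n ^ m" "j' < n ^ m" "i < k" "i' < k"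
    and "j < j' \<or> (j = j' \<and> i < i')"
  moreover have "n = 1 \<Longrightarrow> j = j'" using \<open>j < n ^ m\<close> \<open>j' < n ^ m\<close> by simp
  ultimately consider "n = 1" "i < i'" | "2 \<le> n" "j < j'" | "2 \<le> n" "j = j'" "i < i'"
    by (cases "n = 1") auto
  then show "suffix_position n k j i < suffix_position n k j' i'"
  proof cases
    case 2
    then have "j * n ^ k + (n ^ i - 1) < j' * n ^ k"
      using power_minus_one_less[of n i k] \<open>i < k\<close> by (intro mult_add_less) auto
    then have "j * n ^ k + (n ^ i - 1) < j' * n ^ k + (n ^ i' - 1)"
      by linarith
    with 2 show ?thesis
      unfolding suffix_position_def by simp
  next
    case 3
    then have "n ^ i - 1 < n ^ i' - 1"
      by (simp add: diff_less_mono power_strict_increasing)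
    with 3 show ?thesis by (simp add: suffix_position_def)
  qed (simp add: suffix_position_def)
qed

lemma suffix_positions_less:
  assumes "1 \<le> n"
  shows "set (suffix_positions n m k) \<subseteq> {..<n ^ (m + k) * k}"
proof
  fix p assume "p \<in> set (suffix_positions n m k)"
  then obtain j i where "j < n ^ m" "i < k" and p: "p = suffix_position n k j i"
    by (auto simp: suffix_positions_def set_blocks)
  show "p \<in> {..<n ^ (m + k) * k}"
  proof (cases "n = 1")
    case False
    then have "p < n ^ (m + k)"
      using p assms suffix_position_less_power[OF _ \<open>j < n ^ m\<close> \<open>i < k\<close>] by simp
    also have "\<dots> \<le> n ^ (m + k) * k" using \<open>i < k\<close> by simp
    finally show ?thesis by simp
  qed (use p \<open>i < k\<close> in \<open>simp add: suffix_position_def\<close>)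
qed

lemma mem_suffix_positions:
  assumes "2 \<le> n" and "i' < k" and "length ts = m + k" and "set ts \<subseteq> {..<n}"
  shows "i' * n ^ (m + k) + tuple_rank n ts \<in> set (suffix_positions n m k) \<longleftrightarrow>
    i' = 0 \<and> (\<exists>i<k. drop m ts = thermo n k i)"
proof -
  let ?N = "n ^ (m + k)"
  have ts: "tuple_rank n ts = tuple_rank n (take m ts) * n ^ k + tuple_rank n (drop m ts)"
    and take: "tuple_rank n (take m ts) < n ^ m"
    using assms(3,4) tuple_rank_take_drop tuple_rank_less[of "take m ts" n]
    by (auto dest: in_set_takeD)
  have "i' * ?N + tuple_rank n ts \<in> set (suffix_positions n m k) \<longleftrightarrow>
      (\<exists>j<n ^ m. \<exists>i<k. i' * ?N + tuple_rank n ts = suffix_position n k j i)"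
    by (auto simp: suffix_positions_def set_blocks)
  also have "\<dots> \<longleftrightarrow> i' = 0 \<and> (\<exists>j<n ^ m. \<exists>i<k. tuple_rank n ts = j * n ^ k + (n ^ i - 1))"
  proof -
    have "i' = 0" if "j < n ^ m" "i < k" "i' * ?N + tuple_rank n ts = suffix_position n k j i" for j i
    proof (rule ccontr)
      assume "i' \<noteq> 0"
      then have "1 * ?N \<le> i' * ?N" by (intro mult_le_mono1) simp
      then have "?N \<le> i' * ?N + tuple_rank n ts" by linarith
      with that suffix_position_less_power[OF assms(1)] show False by fastforce
    qed
    then show ?thesis using assms(1) by (auto simp: suffix_position_def) blast+
  qed
  also have "\<dots> \<longleftrightarrow> i' = 0 \<and> (\<exists>i<k. tuple_rank n (drop m ts) = n ^ i - 1)"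
  proof -
    have drop: "tuple_rank n (drop m ts) < n ^ k"
      using assms(3,4) tuple_rank_less[of "drop m ts" n] by (auto dest: in_set_dropD)
    have "tuple_rank n ts = j * n ^ k + (n ^ i - 1) \<longleftrightarrow>
        tuple_rank n (take m ts) = j \<and> tuple_rank n (drop m ts) = n ^ i - 1" if "i < k" for i j
      unfolding ts using mult_add_eq_iff[OF drop power_minus_one_less] assms(1) that by simp
    then show ?thesis using take by auto
  qed
  also have "\<dots> \<longleftrightarrow> i' = 0 \<and> (\<exists>i<k. drop m ts = thermo n k i)"
  proof -
    have "tuple_rank n (drop m ts) = n ^ i - 1 \<longleftrightarrow> drop m ts = thermo n k i" if "i < k" for i
      using assms that by (intro tuple_rank_eq_thermo_iff) (auto dest: in_set_dropD)
    then show ?thesis by auto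
  qed
  finally show ?thesis .
qed

lemma supported_on_suffix_positions:
  assumes "1 \<le> n" and "length c = n ^ (m + k) * k"
  shows "supported_on (set (suffix_positions n m k)) c \<longleftrightarrow>
    n = 1 \<or>
    (\<forall>i'<k. \<forall>ts. length ts = m + k \<longrightarrow> set ts \<subseteq> {..<n} \<longrightarrow>
       c ! (i' * n ^ (m + k) + tuple_rank n ts) \<longrightarrow> i' = 0 \<and> (\<exists>i<k. drop m ts = thermo n k i))"
proof (cases "n = 1")
  case True
  then have "set (suffix_positions n m k) = {..<k}"
    by (auto simp: suffix_positions_def set_blocks suffix_position_def)
  then show ?thesis using assms True by (simp add: supported_on_def)
next
  case False
  with assms have "2 \<le> n" by simp
  then show ?thesis
    using False assms(2) by (simp add: supported_on_def mult.commute[of _ k] all_less_mult_iff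
        all_less_power_iff mem_suffix_positions)
qed

lemma sat_suffix_atom:
  assumes "w \<noteq> []" and "i < k" and "length ts = m"
  shows "sat w (decode_concat (length w) (m + k) k c) v (suffix_atom k i ts) \<longleftrightarrow>
    map (tval w v) ts \<in> decode_inter (length w) m k (map (nth c) (suffix_positions (length w) m k)) i"
proof -
  let ?n = "length w" and ?t = "map (tval w v) ts"
  have "1 \<le> ?n" using assms(1) by (simp add: Suc_leI)
  have rhs: "?t \<in> decode_inter ?n m k (map (nth c) (suffix_positions ?n m k)) i \<longleftrightarrow>
      set ?t \<subseteq> {..<?n} \<and> c ! suffix_position ?n k (tuple_rank ?n ?t) i"
  proof -
    have "map (nth c) (suffix_positions ?n m k) ! (tuple_rank ?n ?t * k + i) =
        c ! suffix_position ?n k (tuple_rank ?n ?t) i" if "set ?t \<subseteq> {..<?n}"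
      using that assms tuple_rank_less[of ?t ?n] mult_add_less[of _ "?n ^ m" i k]
      by (simp add: suffix_positions_def nth_blocks)
    then show ?thesis using assms by (auto simp: mem_decode_inter)
  qed
  have thermo: "set (thermo ?n k i) \<subseteq> {..<?n}" "length (thermo ?n k i) = k"
    using \<open>1 \<le> ?n\<close> assms(2) by (simp_all add: set_thermo length_thermo)
  have "sat w (decode_concat ?n (m + k) k c) v (suffix_atom k i ts) \<longleftrightarrow>
      set ?t \<subseteq> {..<?n} \<and> c ! suffix_position ?n k (tuple_rank ?n ?t) i"
  proof (cases "?n = 1")
    case True
    then have "tuple_rank ?n xs = 0" if "set xs \<subseteq> {..<?n}" for xs
      using tuple_rank_less[OF that] by simp
    with True show ?thesis
      using assms thermo by (auto simp: suffix_atom_def mem_decode_concat suffix_position_def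
          map_tval_thermo_terms)
  next
    case False
    with \<open>1 \<le> ?n\<close> have "\<not> ?n \<le> 1" by simp
    with False show ?thesis
      using assms thermo by (auto simp: suffix_atom_def mem_decode_concat suffix_position_def
          map_tval_thermo_terms tuple_rank_append tuple_rank_thermo)
  qed
  then show ?thesis using rhs by simp
qed

lemma qsentence_suffix_translation:
  assumes "qsentence t s m k phis"
  shows "qsentence t s (m + k) k (guarded_translation (suffix_guard k m) (suffix_atom k) e phis)"
proof (rule qsentence_guarded_translation[OF assms])
  have "fv (eqs_at m (thermo_terms k i)) \<subseteq> {0..<m + k}" if "i < k" for i
    using order_trans[OF fv_eqs_at_subset[OF fvt_thermo_terms, of m k i]] that by auto
  then have "fv (if i' = 0 then disjs (map (\<lambda>i. eqs_at m (thermo_terms k i)) [0..<k]) else falsity)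
      \<subseteq> {0..<m + k}" for i'
    by (simp add: UN_subset_iff)
  then show "fv (suffix_guard k m) = {}"
    unfolding suffix_guard_def by (auto simp: universe_singleton_def dest!: subsetD)
qed (use assms in \<open>auto simp: qsentence_def suffix_guard_def suffix_atom_def universe_singleton_def
       fvt_thermo_terms\<close>)

lemma qsem_suffix_translation:
  assumes "neutral_letter L s e" and "e < s" and "qsentence t s m k phis" and "w \<noteq> []"
  shows "qsem_concat L (m + k) k (guarded_translation (suffix_guard k m) (suffix_atom k) e phis) w
    \<longleftrightarrow> qsem_inter L m k phis w"
proof -
  have "1 \<le> length w" using assms(4) by (simp add: Suc_leI)
  show ?thesis
  proof (rule qsem_guarded_translation[OF assms(1)])
    show "e \<le> length phis" "length phis < s" "\<forall>\<phi>\<in>set phis. wf t m k \<phi>"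
      using assms(2,3) by (auto simp: qsentence_def)
  qed (use \<open>1 \<le> length w\<close> assms(4) in \<open>simp_all add: sorted_suffix_positions
        suffix_positions_less sat_suffix_guard supported_on_suffix_positions sat_suffix_atom\<close>)
qed

lemma qsem_concat_expressible_by_qsem_inter:
  assumes "neutral_letter L s e" and "e < s" and "qsentence t s m k phis"
  shows "\<exists>m' k' psis. qsentence t s m' k' psis \<and>
    (\<forall>w. string_over t w \<longrightarrow> (qsem_concat L m k phis w \<longleftrightarrow> qsem_inter L m' k' psis w))"
proof (intro exI conjI allI impI)
  show "qsentence t s (k + m) k (guarded_translation (prefix_guard k m) (prefix_atom k) e phis)"
    using assms(3) by (rule qsentence_prefix_translation)
  fix w assume "string_over t w"
  then show "qsem_concat L m k phis w \<longleftrightarrow>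
      qsem_inter L (k + m) k (guarded_translation (prefix_guard k m) (prefix_atom k) e phis) w"
    using qsem_prefix_translation[OF assms] by (simp add: string_over_def)
qed

lemma qsem_inter_expressible_by_qsem_concat:
  assumes "neutral_letter L s e" and "e < s" and "qsentence t s m k phis"
  shows "\<exists>m' k' psis. qsentence t s m' k' psis \<and>
    (\<forall>w. string_over t w \<longrightarrow> (qsem_inter L m k phis w \<longleftrightarrow> qsem_concat L m' k' psis w))"
proof (intro exI conjI allI impI)
  show "qsentence t s (m + k) k (guarded_translation (suffix_guard k m) (suffix_atom k) e phis)"
    using assms(3) by (rule qsentence_suffix_translation)
  fix w assume "string_over t w"
  then show "qsem_inter L m k phis w \<longleftrightarrow>
      qsem_concat L (m + k) k (guarded_translation (suffix_guard k m) (suffix_atom k) e phis) w"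
    using qsem_suffix_translation[OF assms] by (simp add: string_over_def)
qed

theorem proposition2p9:
  fixes L :: "nat list set" and s e :: nat
  assumes "L \<subseteq> lists {..<s}"
    and "e < s"
    and "neutral_letter L s e"
  shows "logics_equiv L s"
  (* The words tested for membership in L are over {..<s} by construction. *)
  unfolding logics_equiv_def
  using qsem_concat_expressible_by_qsem_inter[OF assms(3,2)]
    qsem_inter_expressible_by_qsem_concat[OF assms(3,2)]
  by blast

end
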